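(* Let $I_T\subseteq\mathbb{K}[x_1,\dots,x_d]$ be a toric ideal with $I_T\neq\langle x_1-1,\dots,x_d-1\rangle$. There exists a non-trivial linear loop whose invariant ideal is exactly $I_T$.
   Context: $\mathbb{K}=\overline{\mathbb{Q}}$. For an integer matrix $A=(a_{ij})\in\mathbb{Z}^{s\times d}$, let $\pi_A:\mathbb{K}[x_1,\dots,x_d]\to\mathbb{K}[z_1^{\pm1},\dots,z_s^{\pm1}]$ be the ring homomorphism sending $x_j\mapsto z_1^{a_{1j}}\cdots z_s^{a_{sj}}$; the toric ideal $I_A$ is the kernel of $\pi_A$, and a toric ideal is an ideal of the form $I_A$ for some integer matrix $A$. A linear loop with initial vector $\bm{s}\in\mathbb{Q}^d$ and update matrix $M\in\mathbb{Q}^{d\times d}$ has orbit $\{M^n\bm{s}: n\ge0\}$; a polynomial $P\in\mathbb{K}[\bm{x}]$ is an invariant if $P(M^n\bm{s})=0$ for all $n\ge0$, and the invariant ideal is the ideal of all invariants. The loop is non-trivial if its orbit is infinite. *)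

theory Defs
  imports "Jordan_Normal_Form.Matrix" "HOL-Library.Poly_Mapping"
    "HOL-Computational_Algebra.Polynomial"
begin

text \<open>Multivariate polynomials in variables x_0,...,x_(d-1) (paper: x_1..x_d) are
 poly_mappings from monomials (exponent vectors nat =>0 nat) to coefficients.
 The field K = algebraic closure of Q is realised as the algebraic complex numbers.\<close>

type_synonym mpoly = "(nat \<Rightarrow>\<^sub>0 nat) \<Rightarrow>\<^sub>0 complex"

definition Kpolys :: "nat \<Rightarrow> mpoly set" where
  "Kpolys d = {p. (\<forall>m\<in>Poly_Mapping.keys p. Poly_Mapping.keys m \<subseteq> {..<d}) \<and> (\<forall>m. algebraic (Poly_Mapping.lookup p m))}"

definition Var :: "nat \<Rightarrow> mpoly" where
  "Var i = Poly_Mapping.single (Poly_Mapping.single i 1) 1"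

definition eval_mpoly :: "mpoly \<Rightarrow> (nat \<Rightarrow> complex) \<Rightarrow> complex" where
  "eval_mpoly p x = (\<Sum>m\<in>Poly_Mapping.keys p. Poly_Mapping.lookup p m * (\<Prod>i\<in>Poly_Mapping.keys m. x i ^ Poly_Mapping.lookup m i))"

text \<open>Laurent polynomials in z_0..z_(s-1): exponent vectors nat =>0 int.\<close>
type_synonym lpoly = "(nat \<Rightarrow>\<^sub>0 int) \<Rightarrow>\<^sub>0 complex"

definition toric_exp :: "nat \<Rightarrow> nat \<Rightarrow> (nat \<Rightarrow> nat \<Rightarrow> int) \<Rightarrow> (nat \<Rightarrow>\<^sub>0 nat) \<Rightarrow> (nat \<Rightarrow>\<^sub>0 int)" where
  "toric_exp s d A m = Abs_poly_mapping (\<lambda>k. if k < s then (\<Sum>j<d. A k j * int (Poly_Mapping.lookup m j)) else 0)"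

definition pi_A :: "nat \<Rightarrow> nat \<Rightarrow> (nat \<Rightarrow> nat \<Rightarrow> int) \<Rightarrow> mpoly \<Rightarrow> lpoly" where
  "pi_A s d A p = (\<Sum>m\<in>Poly_Mapping.keys p. Poly_Mapping.single (toric_exp s d A m) (Poly_Mapping.lookup p m))"

definition toric_ideal :: "nat \<Rightarrow> nat \<Rightarrow> (nat \<Rightarrow> nat \<Rightarrow> int) \<Rightarrow> mpoly set" where
  "toric_ideal s d A = {p \<in> Kpolys d. pi_A s d A p = 0}"

definition is_toric_ideal :: "nat \<Rightarrow> mpoly set \<Rightarrow> bool" where
  "is_toric_ideal d I \<longleftrightarrow> (\<exists>s A. I = toric_ideal s d A)"

definition ones_ideal :: "nat \<Rightarrow> mpoly set" where
  "ones_ideal d = {p. \<exists>q. (\<forall>i<d. q i \<in> Kpolys d) \<and> p = (\<Sum>i<d. q i * (Var i - 1))}"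

definition loop_orbit :: "rat mat \<Rightarrow> rat vec \<Rightarrow> rat vec set" where
  "loop_orbit M s = {(M ^\<^sub>m n) *\<^sub>v s | n. True}"

definition nontrivial_loop :: "rat mat \<Rightarrow> rat vec \<Rightarrow> bool" where
  "nontrivial_loop M s \<longleftrightarrow> infinite (loop_orbit M s)"

definition vec_point :: "rat vec \<Rightarrow> nat \<Rightarrow> complex" where
  "vec_point v i = of_rat (v $ i)"

definition invariant_ideal :: "nat \<Rightarrow> rat mat \<Rightarrow> rat vec \<Rightarrow> mpoly set" where
  "invariant_ideal d M s = {P \<in> Kpolys d. \<forall>n. eval_mpoly P (vec_point ((M ^\<^sub>m n) *\<^sub>v s)) = 0}"

end

theory Submission
  imports Defs "HOL-Computational_Algebra.Primes" "HOL-Library.Infinite_Set"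
begin

(* Let p_0, p_1, ... be the primes and lambda_j = prod_k p_k^(A k j) the prime code of the
   j-th column of A. The diagonal loop diag(lambda) started at (1, ..., 1) has n-th iterate
   (lambda_j^n)_j, at which a monomial x^m takes the value c(e)^n with e the image of m under
   pi_A and c(e) = prod_k p_k^(e k). Hence P(M^n s) = sum_e (pi_A P)_e c(e)^n. By unique
   factorisation c is injective, and geometric sequences with distinct ratios are linearly
   independent, so P is an invariant iff pi_A P = 0. The loop is non-trivial as soon as A has
   a nonzero entry; for A = 0, I_A consists of the polynomials whose coefficients sum to zero,
   which is exactly <x_1 - 1, ..., x_d - 1>. *)

subsection \<open>Algebraic numbers are closed under addition\<close>

definition rat_scale :: "rat \<Rightarrow> complex \<Rightarrow> complex" where
  "rat_scale r z = of_rat r * z"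

interpretation rat_vs: vector_space rat_scale
  by unfold_locales (auto simp: rat_scale_def algebra_simps of_rat_add of_rat_mult)

lemma rat_vs_span_mult_Rats:
  assumes "q \<in> \<rat>" "x \<in> rat_vs.span F"
  shows "q * x \<in> rat_vs.span F"
proof -
  obtain r where "q = of_rat r" using assms(1) Rats_cases by blast
  then show ?thesis using rat_vs.span_scale[OF assms(2), of r] by (simp add: rat_scale_def)
qed

lemma rat_vs_span_mult:
  assumes "x \<in> rat_vs.span A" "y \<in> rat_vs.span B"
  shows "x * y \<in> rat_vs.span ((\<lambda>(a, b). a * b) ` (A \<times> B))"
  using assms(1)
proof (induction x rule: rat_vs.span_induct_alt)
  case base then show ?case by (simp add: rat_vs.span_zero)
next
  case (step c a x)
  have "a * y \<in> rat_vs.span ((\<lambda>(a, b). a * b) ` (A \<times> B))"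
    using assms(2)
  proof (induction y rule: rat_vs.span_induct_alt)
    case base then show ?case by (simp add: rat_vs.span_zero)
  next
    case (step c' b y)
    have "a * b \<in> rat_vs.span ((\<lambda>(a, b). a * b) ` (A \<times> B))"
      using \<open>a \<in> A\<close> \<open>b \<in> B\<close> by (intro rat_vs.span_base) auto
    moreover have "a * (rat_scale c' b + y) = rat_scale c' (a * b) + a * y"
      by (simp add: rat_scale_def algebra_simps)
    ultimately show ?case by (simp add: rat_vs.span_add rat_vs.span_scale step.IH)
  qed
  moreover have "(rat_scale c a + x) * y = rat_scale c (a * y) + x * y"
    by (simp add: rat_scale_def algebra_simps)
  ultimately show ?case by (simp add: rat_vs.span_add rat_vs.span_scale step.IH)
qed

lemma algebraic_imp_powers_in_finite_span:
  assumes "algebraic (a::complex)"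
  obtains F where "finite F" "\<And>k. a ^ k \<in> rat_vs.span F"
proof -
  obtain p where p: "\<And>i. coeff p i \<in> \<rat>" "p \<noteq> 0" "poly p a = 0"
    using assms unfolding algebraic_altdef by blast
  define n where "n = degree p"
  define l where "l = lead_coeff p"
  have "l \<noteq> 0" "l \<in> \<rat>" using p(1,2) by (simp_all add: l_def)
  have "0 = (\<Sum>i<n. coeff p i * a ^ i) + l * a ^ n"
    using p(3) by (simp add: poly_altdef n_def l_def lessThan_Suc_atMost[symmetric])
  then have "l * a ^ n = - (\<Sum>i<n. coeff p i * a ^ i)"
    by (simp add: eq_neg_iff_add_eq_0 add.commute)
  then have "a ^ n = - (\<Sum>i<n. coeff p i * a ^ i) / l"
    using \<open>l \<noteq> 0\<close> by (metis nonzero_mult_div_cancel_left)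
  then have top_power: "a ^ n = (\<Sum>i<n. (- coeff p i / l) * a ^ i)"
    by (simp add: sum_divide_distrib sum_negf[symmetric])
  have "a ^ k \<in> rat_vs.span ((\<lambda>i. a ^ i) ` {..<n})" for k
  proof (induction k rule: less_induct)
    case (less k)
    show ?case
    proof (cases "k < n")
      case True then show ?thesis by (intro rat_vs.span_base) auto
    next
      case False
      then have "a ^ k = a ^ (k - n) * a ^ n" by (simp flip: power_add)
      also have "\<dots> = (\<Sum>i<n. (- coeff p i / l) * a ^ (k - n + i))"
        by (subst top_power) (simp add: sum_distrib_left power_add algebra_simps)
      also have "\<dots> \<in> rat_vs.span ((\<lambda>i. a ^ i) ` {..<n})"
        using False p(1) \<open>l \<in> \<rat>\<close> by (intro rat_vs.span_sum rat_vs_span_mult_Rats less) auto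
      finally show ?thesis .
    qed
  qed
  then show thesis using that[of "(\<lambda>i. a ^ i) ` {..<n}"] by blast
qed

lemma algebraic_if_powers_in_finite_span:
  assumes "finite F" "\<And>k. c ^ k \<in> rat_vs.span F"
  shows "algebraic (c::complex)"
proof (cases "inj_on (\<lambda>k. c ^ k) {..card F}")
  case False
  then obtain i j where ij: "i \<noteq> j" "c ^ i = c ^ j" unfolding inj_on_def by blast
  show ?thesis
  proof (rule algebraicI'[of "monom 1 i - monom 1 j"])
    have "coeff (monom 1 i - monom 1 j) i = 1" using ij by (simp add: coeff_monom)
    then show "monom 1 i - monom 1 j \<noteq> (0 :: complex poly)" by (metis coeff_0 zero_neq_one)
  qed (use ij in \<open>auto simp: coeff_monom poly_monom\<close>)
next
  case True
  define S where "S = (\<lambda>k. c ^ k) ` {..card F}"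
  have "card S = Suc (card F)" using True by (simp add: S_def card_image)
  moreover have "S \<subseteq> rat_vs.span F" using assms(2) by (auto simp: S_def)
  ultimately have "rat_vs.dependent S"
    using rat_vs.independent_span_bound[OF assms(1)] by fastforce
  then obtain u where u: "\<exists>v\<in>S. u v \<noteq> 0" "(\<Sum>v\<in>S. rat_scale (u v) v) = 0"
    by (auto simp: S_def rat_vs.dependent_finite)
  define p where "p = (\<Sum>k\<le>card F. monom (of_rat (u (c ^ k)) :: complex) k)"
  have coeff_p: "coeff p k = (if k \<le> card F then of_rat (u (c ^ k)) else 0)" for k
    by (simp add: p_def coeff_sum coeff_monom)
  show ?thesis
  proof (rule algebraicI'[of p])
    show "coeff p k \<in> \<rat>" for k by (simp add: coeff_p)
    obtain k where "k \<le> card F" "u (c ^ k) \<noteq> 0" using u(1) by (auto simp: S_def)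
    then have "coeff p k \<noteq> 0" by (simp add: coeff_p)
    then show "p \<noteq> 0" by auto
    have "poly p c = (\<Sum>v\<in>S. rat_scale (u v) v)"
      by (simp add: p_def poly_sum poly_monom S_def sum.reindex[OF True] rat_scale_def)
    then show "poly p c = 0" using u(2) by simp
  qed
qed

lemma algebraic_add:
  assumes "algebraic (a::complex)" "algebraic b"
  shows "algebraic (a + b)"
proof -
  obtain A where A: "finite A" "\<And>k. a ^ k \<in> rat_vs.span A"
    using algebraic_imp_powers_in_finite_span[OF assms(1)] by blast
  obtain B where B: "finite B" "\<And>k. b ^ k \<in> rat_vs.span B"
    using algebraic_imp_powers_in_finite_span[OF assms(2)] by blast
  let ?F = "(\<lambda>(x, y). x * y) ` (A \<times> B)"
  show ?thesis
  proof (rule algebraic_if_powers_in_finite_span)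
    show "finite ?F" using A B by simp
    fix n
    have "(a + b) ^ n = (\<Sum>k\<le>n. of_nat (n choose k) * (a ^ k * b ^ (n - k)))"
      by (simp add: binomial_ring mult.assoc)
    also have "\<dots> \<in> rat_vs.span ?F"
      by (intro rat_vs.span_sum rat_vs_span_mult_Rats[OF Rats_of_nat] rat_vs_span_mult A B)
    finally show "(a + b) ^ n \<in> rat_vs.span ?F" .
  qed
qed

subsection \<open>The ideal generated by the \<open>x\<^sub>i - 1\<close>\<close>

lemma poly_mapping_sum_singles:
  "(\<Sum>m\<in>Poly_Mapping.keys p. Poly_Mapping.single m (Poly_Mapping.lookup p m)) = p"
  by (rule poly_mapping_eqI)
     (simp add: lookup_sum lookup_single when_def in_keys_iff sum.delta' split: if_splits)

lemma single_sum: "Poly_Mapping.single k (sum f A) = (\<Sum>x\<in>A. Poly_Mapping.single k (f x))"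
  by (induction A rule: infinite_finite_induct) (simp_all add: single_add)

lemma keys_add_nat: "Poly_Mapping.keys (f + g :: 'a \<Rightarrow>\<^sub>0 nat) = Poly_Mapping.keys f \<union> Poly_Mapping.keys g"
  by (auto simp: in_keys_iff lookup_add)

lemma nat_poly_mapping_induct [case_names zero add_single]:
  fixes m :: "'a \<Rightarrow>\<^sub>0 nat"
  assumes "P 0" "\<And>m i. P m \<Longrightarrow> P (m + Poly_Mapping.single i 1)"
  shows "P m"
proof (induction m rule: update_induct)
  case const show ?case by (rule assms(1))
next
  case (update f a b)
  have "P (f + Poly_Mapping.single a c)" for c
  proof (induction c)
    case (Suc c)
    have "f + Poly_Mapping.single a (Suc c) = (f + Poly_Mapping.single a c) + Poly_Mapping.single a 1"
      by (metis Suc_eq_plus1 add.assoc single_add)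
    then show ?case using assms(2)[OF Suc.IH] by simp
  qed (use update.IH in simp)
  moreover have "Poly_Mapping.update a b f = f + Poly_Mapping.single a b"
    using update.hyps(1)
    by (intro poly_mapping_eqI) (auto simp: lookup_update lookup_add lookup_single in_keys_iff)
  ultimately show ?case by simp
qed

lemma zero_in_Kpolys [simp]: "0 \<in> Kpolys d"
  by (simp add: Kpolys_def)

lemma Kpolys_add: "p \<in> Kpolys d \<Longrightarrow> q \<in> Kpolys d \<Longrightarrow> p + q \<in> Kpolys d"
  using keys_add[of p q] by (fastforce simp: Kpolys_def lookup_add intro: algebraic_add)

lemma Kpolys_diff: "p \<in> Kpolys d \<Longrightarrow> q \<in> Kpolys d \<Longrightarrow> p - q \<in> Kpolys d"
  using Kpolys_add[of p d "- q"] by (auto simp: Kpolys_def in_keys_iff)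

lemma Kpolys_sum: "(\<And>x. x \<in> A \<Longrightarrow> f x \<in> Kpolys d) \<Longrightarrow> sum f A \<in> Kpolys d"
  by (induction A rule: infinite_finite_induct) (simp_all add: Kpolys_add)

lemma Kpolys_single:
  "Poly_Mapping.keys m \<subseteq> {..<d} \<Longrightarrow> algebraic c \<Longrightarrow> Poly_Mapping.single m c \<in> Kpolys d"
  unfolding Kpolys_def by (auto simp: lookup_single when_def)

lemma single_one_mult:
  "Poly_Mapping.single m 1 * (q::mpoly)
     = (\<Sum>k\<in>Poly_Mapping.keys q. Poly_Mapping.single (m + k) (Poly_Mapping.lookup q k))"
  by (subst (1) poly_mapping_sum_singles[of q, symmetric]) (simp add: sum_distrib_left mult_single)

lemma Kpolys_single_one_mult:
  assumes "Poly_Mapping.keys m \<subseteq> {..<d}" "q \<in> Kpolys d"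
  shows "Poly_Mapping.single m 1 * (q::mpoly) \<in> Kpolys d"
  unfolding single_one_mult
proof (intro Kpolys_sum Kpolys_single)
  fix k assume k: "k \<in> Poly_Mapping.keys q"
  then show "algebraic (Poly_Mapping.lookup q k)" using assms(2) by (simp add: Kpolys_def)
  show "Poly_Mapping.keys (m + k) \<subseteq> {..<d}"
    using assms k by (auto simp: Kpolys_def keys_add_nat)
qed

definition sum_coeffs :: "mpoly \<Rightarrow> complex" where
  "sum_coeffs p = (\<Sum>m\<in>Poly_Mapping.keys p. Poly_Mapping.lookup p m)"

lemma sum_coeffs_zero [simp]: "sum_coeffs 0 = 0"
  by (simp add: sum_coeffs_def)

lemma sum_coeffs_add: "sum_coeffs (p + q) = sum_coeffs p + sum_coeffs q"
  unfolding sum_coeffs_def by (rule setsum_keys_plus_distrib[where f = "\<lambda>_ c. c"]) simp_all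

lemma sum_coeffs_diff: "sum_coeffs (p - q) = sum_coeffs p - sum_coeffs q"
  using sum_coeffs_add[of "p - q" q] by simp

lemma sum_coeffs_single [simp]: "sum_coeffs (Poly_Mapping.single m c) = c"
  by (simp add: sum_coeffs_def)

lemma sum_coeffs_sum: "sum_coeffs (sum f A) = (\<Sum>x\<in>A. sum_coeffs (f x))"
  by (induction A rule: infinite_finite_induct) (simp_all add: sum_coeffs_add)

lemma sum_coeffs_single_one_mult: "sum_coeffs (Poly_Mapping.single m 1 * q) = sum_coeffs q"
  by (simp add: single_one_mult sum_coeffs_sum) (simp add: sum_coeffs_def)

lemma ones_idealI:
  "(\<And>i. i < d \<Longrightarrow> q i \<in> Kpolys d) \<Longrightarrow> p = (\<Sum>i<d. q i * (Var i - 1)) \<Longrightarrow> p \<in> ones_ideal d"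
  unfolding ones_ideal_def by blast

lemma zero_in_ones_ideal: "0 \<in> ones_ideal d"
  by (rule ones_idealI[of d "\<lambda>_. 0"]) simp_all

lemma ones_ideal_add: "p \<in> ones_ideal d \<Longrightarrow> q \<in> ones_ideal d \<Longrightarrow> p + q \<in> ones_ideal d"
proof -
  assume "p \<in> ones_ideal d" "q \<in> ones_ideal d"
  then obtain f g where
    "\<And>i. i < d \<Longrightarrow> f i \<in> Kpolys d" "p = (\<Sum>i<d. f i * (Var i - 1))"
    "\<And>i. i < d \<Longrightarrow> g i \<in> Kpolys d" "q = (\<Sum>i<d. g i * (Var i - 1))"
    unfolding ones_ideal_def by blast
  then show ?thesis
    by (intro ones_idealI[of d "\<lambda>i. f i + g i"]) (simp_all add: Kpolys_add distrib_right sum.distrib)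
qed

lemma ones_ideal_sum: "(\<And>x. x \<in> A \<Longrightarrow> f x \<in> ones_ideal d) \<Longrightarrow> sum f A \<in> ones_ideal d"
  by (induction A rule: infinite_finite_induct) (simp_all add: ones_ideal_add zero_in_ones_ideal)

lemma mult_Var_minus_one_in_ones_ideal:
  assumes "i < d" "q \<in> Kpolys d"
  shows "q * (Var i - 1) \<in> ones_ideal d"
proof (rule ones_idealI[of d "\<lambda>j. if j = i then q else 0"])
  show "(if j = i then q else 0) \<in> Kpolys d" for j using assms(2) by simp
  show "q * (Var i - 1) = (\<Sum>j<d. (if j = i then q else 0) * (Var j - 1))"
    using assms(1) by (simp add: if_distrib[of "\<lambda>x. x * _"] cong: if_cong)
qed

lemma single_minus_single_zero_in_ones_ideal:
  assumes "Poly_Mapping.keys m \<subseteq> {..<d}" "algebraic c"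
  shows "Poly_Mapping.single m c - Poly_Mapping.single 0 c \<in> ones_ideal d"
  using assms(1)
proof (induction m rule: nat_poly_mapping_induct)
  case zero then show ?case by (simp add: zero_in_ones_ideal)
next
  case (add_single m i)
  then have m: "Poly_Mapping.keys m \<subseteq> {..<d}" and "i < d" by (auto simp: keys_add_nat)
  have "Poly_Mapping.single (m + Poly_Mapping.single i 1) c - Poly_Mapping.single 0 c
      = Poly_Mapping.single m c * (Var i - 1) + (Poly_Mapping.single m c - Poly_Mapping.single 0 c)"
    by (simp add: Var_def mult_single algebra_simps)
  also have "\<dots> \<in> ones_ideal d"
    using \<open>i < d\<close> m assms(2)
    by (intro ones_ideal_add mult_Var_minus_one_in_ones_ideal Kpolys_single add_single.IH[OF m])
  finally show ?case .
qed

lemma ones_ideal_eq: "ones_ideal d = {p \<in> Kpolys d. sum_coeffs p = 0}"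
proof (intro equalityI subsetI CollectI conjI)
  fix p assume "p \<in> ones_ideal d"
  then obtain q where q: "\<And>i. i < d \<Longrightarrow> q i \<in> Kpolys d" "p = (\<Sum>i<d. q i * (Var i - 1))"
    unfolding ones_ideal_def by blast
  then have p: "p = (\<Sum>i<d. Poly_Mapping.single (Poly_Mapping.single i 1) 1 * q i - q i)"
    by (simp add: Var_def algebra_simps)
  show "p \<in> Kpolys d" unfolding p
    using q(1) by (intro Kpolys_sum Kpolys_diff Kpolys_single_one_mult) auto
  show "sum_coeffs p = 0" unfolding p
    by (simp add: sum_coeffs_sum sum_coeffs_diff sum_coeffs_single_one_mult)
next
  fix p assume p: "p \<in> {p \<in> Kpolys d. sum_coeffs p = 0}"
  let ?c = "Poly_Mapping.lookup p"
  have "p = (\<Sum>m\<in>Poly_Mapping.keys p. Poly_Mapping.single m (?c m) - Poly_Mapping.single 0 (?c m))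
            + Poly_Mapping.single 0 (sum_coeffs p)"
    by (simp add: sum_subtractf sum_coeffs_def single_sum poly_mapping_sum_singles)
  also have "\<dots> = (\<Sum>m\<in>Poly_Mapping.keys p. Poly_Mapping.single m (?c m) - Poly_Mapping.single 0 (?c m))"
    using p by simp
  also have "\<dots> \<in> ones_ideal d"
  proof (intro ones_ideal_sum single_minus_single_zero_in_ones_ideal)
    fix m assume "m \<in> Poly_Mapping.keys p"
    then show "Poly_Mapping.keys m \<subseteq> {..<d}" "algebraic (?c m)" using p by (auto simp: Kpolys_def)
  qed
  finally show "p \<in> ones_ideal d" .
qed

subsection \<open>Prime codes of integer vectors\<close>

definition nth_prime :: "nat \<Rightarrow> nat" where
  "nth_prime = enumerate {p. prime p}"

lemma prime_nth_prime: "prime (nth_prime k)"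
  unfolding nth_prime_def using enumerate_in_set[OF primes_infinite] by blast

lemma inj_nth_prime: "inj nth_prime"
  unfolding nth_prime_def
  using strict_mono_enumerate[OF primes_infinite] strict_mono_imp_inj_on by blast

lemma nth_prime_pos: "0 < nth_prime k"
  using prime_nth_prime prime_gt_0_nat by blast

definition prime_code :: "nat \<Rightarrow> (nat \<Rightarrow> int) \<Rightarrow> 'a::field" where
  "prime_code s e = (\<Prod>k<s. of_nat (nth_prime k) powi e k)"

lemma prime_code_pos: "prime_code s e > (0::'a::linordered_field)"
  unfolding prime_code_def using nth_prime_pos by (intro prod_pos) auto

lemma prime_code_nonzero: "prime_code s e \<noteq> (0::'a::field_char_0)"
  unfolding prime_code_def using nth_prime_pos by (auto simp: power_int_not_zero)

lemma of_rat_prime_code: "of_rat (prime_code s e) = (prime_code s e :: 'a::field_char_0)"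
  unfolding prime_code_def of_rat_prod
  by (intro prod.cong) (auto simp: power_int_def of_rat_power of_rat_inverse)

lemma prime_code_cong: "(\<And>k. k < s \<Longrightarrow> e k = f k) \<Longrightarrow> prime_code s e = prime_code s f"
  unfolding prime_code_def by (intro prod.cong) auto

lemma prime_code_zero: "prime_code s (\<lambda>_. 0) = 1"
  by (simp add: prime_code_def)

lemma prime_code_add:
  "prime_code s (\<lambda>k. e k + f k) = (prime_code s e * prime_code s f :: 'a::field_char_0)"
  unfolding prime_code_def prod.distrib[symmetric] using nth_prime_pos
  by (intro prod.cong) (auto simp: power_int_add)

lemma prime_code_sum:
  "prime_code s (\<lambda>k. \<Sum>j\<in>J. g j k) = (\<Prod>j\<in>J. prime_code s (g j) :: 'a::field_char_0)"
  by (induction J rule: infinite_finite_induct) (simp_all add: prime_code_zero prime_code_add)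

lemma prime_code_of_nat_mult:
  "prime_code s (\<lambda>k. int c * e k) = (prime_code s e ^ c :: 'a::field_char_0)"
proof (induction c)
  case (Suc c)
  have "prime_code s (\<lambda>k. int (Suc c) * e k) = (prime_code s (\<lambda>k. e k + int c * e k) :: 'a)"
    by (simp add: algebra_simps)
  then show ?case by (simp add: prime_code_add Suc.IH)
qed (simp add: prime_code_zero)

lemma prime_code_of_nat:
  "prime_code s (\<lambda>k. int (a k)) = (of_nat (\<Prod>k<s. nth_prime k ^ a k) :: 'a::field)"
  by (simp add: prime_code_def)

lemma multiplicity_prod_nth_prime_powers:
  "multiplicity (nth_prime j) (\<Prod>k<s. nth_prime k ^ a k) = (if j < s then a j else 0)"
proof -
  have "(\<Prod>k<s. nth_prime k ^ a k) = (\<Prod>p\<in>nth_prime ` {..<s}. p ^ a (inv_into UNIV nth_prime p))"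
    using inj_nth_prime by (subst prod.reindex) (auto simp: inj_on_def inv_f_f)
  also have "multiplicity (nth_prime j) \<dots>
      = (if nth_prime j \<in> nth_prime ` {..<s} then a (inv_into UNIV nth_prime (nth_prime j)) else 0)"
    by (rule multiplicity_prod_prime_powers) (auto simp: prime_nth_prime)
  also have "\<dots> = (if j < s then a j else 0)"
    using inj_nth_prime by (auto simp: inv_f_f inj_image_mem_iff)
  finally show ?thesis .
qed

lemma prime_code_inj:
  assumes "prime_code s e = (prime_code s f :: 'a::field_char_0)" "j < s"
  shows "e j = f j"
proof -
  define a where "a k = nat (e k - f k)" for k
  define b where "b k = nat (f k - e k)" for k
  have "prime_code s e * prime_code s (\<lambda>k. int (b k))
      = (prime_code s f * prime_code s (\<lambda>k. int (a k)) :: 'a)"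
    unfolding prime_code_add[symmetric] by (rule prime_code_cong) (simp add: a_def b_def)
  then have "prime_code s (\<lambda>k. int (b k)) = (prime_code s (\<lambda>k. int (a k)) :: 'a)"
    using assms(1) prime_code_nonzero[of s f] by auto
  then have "(\<Prod>k<s. nth_prime k ^ b k) = (\<Prod>k<s. nth_prime k ^ a k)"
    unfolding prime_code_of_nat of_nat_eq_iff .
  then have "b j = a j"
    using multiplicity_prod_nth_prime_powers[of j _ s] assms(2) by metis
  then show ?thesis by (simp add: a_def b_def)
qed

subsection \<open>Linear independence of geometric sequences\<close>

lemma geometric_sequences_independent:
  assumes "finite E" "inj_on r E" "\<And>n. (\<Sum>e\<in>E. c e * r e ^ n) = (0::'a::idom)"
  shows "\<forall>e\<in>E. c e = 0"
  using assms
proof (induction E arbitrary: c rule: finite_induct)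
  case (insert x F)
  have "(\<Sum>e\<in>F. (c e * (r e - r x)) * r e ^ n) = 0" for n
  proof -
    have "(\<Sum>e\<in>F. (c e * (r e - r x)) * r e ^ n)
        = (\<Sum>e\<in>insert x F. c e * r e ^ Suc n) - r x * (\<Sum>e\<in>insert x F. c e * r e ^ n)"
      using insert.hyps by (simp add: sum_distrib_left sum_subtractf[symmetric] algebra_simps)
    then show ?thesis unfolding insert.prems(2) by simp
  qed
  then have "\<forall>e\<in>F. c e * (r e - r x) = 0"
    using insert.prems(1) by (intro insert.IH) auto
  moreover have "r e \<noteq> r x" if "e \<in> F" for e
    using insert.prems(1) insert.hyps(2) that by (auto simp: inj_on_def)
  ultimately have "\<forall>e\<in>F. c e = 0" by auto
  moreover have "(\<Sum>e\<in>insert x F. c e * r e ^ 0) = 0" by (rule insert.prems(2))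
  ultimately show ?case using insert.hyps by simp
qed simp

lemma mat_diag_power: "mat_diag n f ^\<^sub>m k = mat_diag n (\<lambda>i. f i ^ k)"
  by (induction k) (simp_all add: carrier_matD[OF mat_diag_dim] power_Suc2 del: power_Suc)

lemma mat_diag_mult_vec:
  assumes "v \<in> carrier_vec n"
  shows "mat_diag n f *\<^sub>v v = vec n (\<lambda>i. f i * v $ i)"
proof (rule eq_vecI)
  fix i assume "i < dim_vec (vec n (\<lambda>i. f i * v $ i))"
  then have "i < n" by simp
  then have "(mat_diag n f *\<^sub>v v) $ i = (\<Sum>j<n. (if i = j then f j else 0) * v $ j)"
    using assms by (simp add: mat_diag_def scalar_prod_def atLeast0LessThan)
  also have "\<dots> = f i * v $ i"
    using \<open>i < n\<close> by (subst sum.remove[of _ i]) auto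
  finally show "(mat_diag n f *\<^sub>v v) $ i = vec n (\<lambda>i. f i * v $ i) $ i"
    using \<open>i < n\<close> by simp
qed (simp add: mat_diag_def)

subsection \<open>The diagonal loop of a toric ideal\<close>

definition toric_loop_matrix :: "nat \<Rightarrow> nat \<Rightarrow> (nat \<Rightarrow> nat \<Rightarrow> int) \<Rightarrow> rat mat" where
  "toric_loop_matrix s d A = mat_diag d (\<lambda>j. prime_code s (\<lambda>k. A k j))"

lemma toric_loop_iterate:
  "(toric_loop_matrix s d A ^\<^sub>m n) *\<^sub>v vec d (\<lambda>_. 1) = vec d (\<lambda>j. prime_code s (\<lambda>k. A k j) ^ n)"
  by (auto simp: toric_loop_matrix_def mat_diag_power mat_diag_mult_vec intro!: eq_vecI)

lemma lookup_toric_exp: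
  "Poly_Mapping.lookup (toric_exp s d A m) k
     = (if k < s then (\<Sum>j<d. A k j * int (Poly_Mapping.lookup m j)) else 0)"
proof -
  have "finite {k. (if k < s then (\<Sum>j<d. A k j * int (Poly_Mapping.lookup m j)) else 0) \<noteq> 0}"
    by (rule finite_subset[of _ "{..<s}"]) auto
  then show ?thesis unfolding toric_exp_def by simp
qed

lemma lookup_pi_A:
  "Poly_Mapping.lookup (pi_A s d A P) e
     = (\<Sum>m | m \<in> Poly_Mapping.keys P \<and> toric_exp s d A m = e. Poly_Mapping.lookup P m)"
  unfolding pi_A_def lookup_sum by (simp add: lookup_single when_def sum.inter_filter)

lemma prime_code_toric_exp:
  assumes "Poly_Mapping.keys m \<subseteq> {..<d}"
  shows "prime_code s (Poly_Mapping.lookup (toric_exp s d A m))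
       = (\<Prod>j\<in>Poly_Mapping.keys m. prime_code s (\<lambda>k. A k j) ^ Poly_Mapping.lookup m j
            :: 'a::field_char_0)"
proof -
  have "prime_code s (Poly_Mapping.lookup (toric_exp s d A m))
      = (prime_code s (\<lambda>k. \<Sum>j<d. int (Poly_Mapping.lookup m j) * A k j) :: 'a)"
    by (rule prime_code_cong) (simp add: lookup_toric_exp mult.commute)
  also have "\<dots> = (\<Prod>j<d. prime_code s (\<lambda>k. A k j) ^ Poly_Mapping.lookup m j)"
    by (simp add: prime_code_sum prime_code_of_nat_mult)
  also have "\<dots> = (\<Prod>j\<in>Poly_Mapping.keys m. prime_code s (\<lambda>k. A k j) ^ Poly_Mapping.lookup m j)"
    using assms by (intro prod.mono_neutral_right) (auto simp: in_keys_iff)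
  finally show ?thesis .
qed

lemma eval_toric_loop:
  assumes "P \<in> Kpolys d"
  shows "eval_mpoly P (vec_point ((toric_loop_matrix s d A ^\<^sub>m n) *\<^sub>v vec d (\<lambda>_. 1)))
       = (\<Sum>e\<in>toric_exp s d A ` Poly_Mapping.keys P.
            Poly_Mapping.lookup (pi_A s d A P) e * prime_code s (Poly_Mapping.lookup e) ^ n)"
proof -
  let ?te = "toric_exp s d A"
  have monomial: "(\<Prod>j\<in>Poly_Mapping.keys m.
        vec_point ((toric_loop_matrix s d A ^\<^sub>m n) *\<^sub>v vec d (\<lambda>_. 1)) j ^ Poly_Mapping.lookup m j)
      = prime_code s (Poly_Mapping.lookup (?te m)) ^ n" if "m \<in> Poly_Mapping.keys P" for m
  proof -
    have keys_m: "Poly_Mapping.keys m \<subseteq> {..<d}" using assms that by (auto simp: Kpolys_def)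
    then have "(\<Prod>j\<in>Poly_Mapping.keys m.
        vec_point ((toric_loop_matrix s d A ^\<^sub>m n) *\<^sub>v vec d (\<lambda>_. 1)) j ^ Poly_Mapping.lookup m j)
      = (\<Prod>j\<in>Poly_Mapping.keys m. prime_code s (\<lambda>k. A k j) ^ Poly_Mapping.lookup m j) ^ n"
      by (auto simp: toric_loop_iterate vec_point_def of_rat_power of_rat_prime_code
          prod_power_distrib power_mult[symmetric] mult.commute intro!: prod.cong)
    then show ?thesis by (simp add: prime_code_toric_exp[OF keys_m])
  qed
  have "eval_mpoly P (vec_point ((toric_loop_matrix s d A ^\<^sub>m n) *\<^sub>v vec d (\<lambda>_. 1)))
      = (\<Sum>m\<in>Poly_Mapping.keys P. Poly_Mapping.lookup P m * prime_code s (Poly_Mapping.lookup (?te m)) ^ n)"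
    unfolding eval_mpoly_def by (simp add: monomial)
  also have "\<dots> = (\<Sum>e\<in>?te ` Poly_Mapping.keys P. \<Sum>m | m \<in> Poly_Mapping.keys P \<and> ?te m = e.
                     Poly_Mapping.lookup P m * prime_code s (Poly_Mapping.lookup (?te m)) ^ n)"
    by (rule sum.image_gen) simp
  also have "\<dots> = (\<Sum>e\<in>?te ` Poly_Mapping.keys P.
                     Poly_Mapping.lookup (pi_A s d A P) e * prime_code s (Poly_Mapping.lookup e) ^ n)"
    unfolding lookup_pi_A sum_distrib_right by (intro sum.cong) auto
  finally show ?thesis .
qed

lemma toric_loop_invariant_iff:
  assumes "P \<in> Kpolys d"
  shows "(\<forall>n. eval_mpoly P (vec_point ((toric_loop_matrix s d A ^\<^sub>m n) *\<^sub>v vec d (\<lambda>_. 1))) = 0)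
     \<longleftrightarrow> pi_A s d A P = 0"
proof
  let ?E = "toric_exp s d A ` Poly_Mapping.keys P"
  assume "\<forall>n. eval_mpoly P (vec_point ((toric_loop_matrix s d A ^\<^sub>m n) *\<^sub>v vec d (\<lambda>_. 1))) = 0"
  moreover have "inj_on (\<lambda>e. prime_code s (Poly_Mapping.lookup e) :: complex) ?E"
  proof (intro inj_onI poly_mapping_eqI)
    fix e e' k
    assume "e \<in> ?E" "e' \<in> ?E"
      and "prime_code s (Poly_Mapping.lookup e) = (prime_code s (Poly_Mapping.lookup e') :: complex)"
    then show "Poly_Mapping.lookup e k = Poly_Mapping.lookup e' k"
      by (cases "k < s") (auto simp: lookup_toric_exp dest: prime_code_inj)
  qed
  ultimately have "\<forall>e\<in>?E. Poly_Mapping.lookup (pi_A s d A P) e = 0"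
    by (intro geometric_sequences_independent) (auto simp: eval_toric_loop[OF assms])
  moreover have "Poly_Mapping.lookup (pi_A s d A P) e = 0" if "e \<notin> ?E" for e
    using that by (auto simp: lookup_pi_A intro: sum.neutral)
  ultimately show "pi_A s d A P = 0"
    by (intro poly_mapping_eqI) (metis lookup_zero)
qed (simp add: eval_toric_loop[OF assms])

lemma invariant_ideal_toric_loop:
  "invariant_ideal d (toric_loop_matrix s d A) (vec d (\<lambda>_. 1)) = toric_ideal s d A"
  unfolding invariant_ideal_def toric_ideal_def using toric_loop_invariant_iff by blast

lemma nontrivial_toric_loop:
  assumes "k < s" "j < d" "A k j \<noteq> 0"
  shows "nontrivial_loop (toric_loop_matrix s d A) (vec d (\<lambda>_. 1))"
proof -
  let ?l = "prime_code s (\<lambda>k. A k j) :: rat"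
  have "?l \<noteq> 1"
    using prime_code_inj[of s "\<lambda>k. A k j" "\<lambda>_. 0", OF _ assms(1)] assms(3)
    by (auto simp: prime_code_zero)
  then have "inj (\<lambda>n. ?l ^ n)"
    by (metis injI power_inject_exp' prime_code_pos)
  then have "inj (\<lambda>n. (toric_loop_matrix s d A ^\<^sub>m n) *\<^sub>v vec d (\<lambda>_. 1))"
    using assms(2) by (auto simp: inj_def toric_loop_iterate dest!: arg_cong[where f = "\<lambda>v. v $ j"])
  then show ?thesis
    unfolding nontrivial_loop_def loop_orbit_def by (simp add: full_SetCompr_eq range_inj_infinite)
qed

lemma toric_ideal_zero_matrix:
  assumes "\<And>k j. k < s \<Longrightarrow> j < d \<Longrightarrow> A k j = 0"
  shows "toric_ideal s d A = ones_ideal d"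
proof -
  have "toric_exp s d A m = 0" for m
    by (rule poly_mapping_eqI) (simp add: lookup_toric_exp assms)
  then have "pi_A s d A p = Poly_Mapping.single 0 (sum_coeffs p)" for p
    by (simp add: pi_A_def sum_coeffs_def single_sum)
  then have "pi_A s d A p = 0 \<longleftrightarrow> sum_coeffs p = 0" for p
    by (metis lookup_single_eq single_zero)
  then show ?thesis
    by (auto simp: toric_ideal_def ones_ideal_eq)
qed

theorem theorem5p2:
  fixes d :: nat and I :: "mpoly set"
  assumes "is_toric_ideal d I"
    and "I \<noteq> ones_ideal d"
  shows "\<exists>M s. M \<in> carrier_mat d d \<and> s \<in> carrier_vec d \<and>
           nontrivial_loop M s \<and> invariant_ideal d M s = I"
proof -
  obtain s A where I: "I = toric_ideal s d A"
    using assms(1) unfolding is_toric_ideal_def by blast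
  then obtain k j where "k < s" "j < d" "A k j \<noteq> 0"
    using toric_ideal_zero_matrix[of s d A] assms(2) by blast
  then show ?thesis
    using nontrivial_toric_loop invariant_ideal_toric_loop I
    by (intro exI[of _ "toric_loop_matrix s d A"] exI[of _ "vec d (\<lambda>_. 1) :: rat vec"])
       (simp add: toric_loop_matrix_def)
qed

end
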